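(* Let $E$ be a finite set and $\mathcal{A}$ a set-arrangement on $E$, with local Lie algebras $L_A=\mathcal{F}(A)/\langle R_A\rangle$, $R_A\subseteq[\mathcal{F}(A),\mathcal{F}(A)]$, for $A\in\mathcal{A}$, and let $\mathcal{L}=\mathcal{F}(E)/\langle R\rangle$ with $$R=\bigcup_{A\in\mathcal{A}}R_A\ \cup\ \{[x,y]:\ x,y\in E,\ \{x,y\}\not\subseteq A \text{ for every } A\in\mathcal{A}\}.$$ Let $\mathcal{B}_1,\dots,\mathcal{B}_k$ be pairwise disjoint subsets of $\mathcal{A}$, each closed in $\mathcal{A}$, with $\bigcup_{i=1}^k\mathcal{B}_i=\mathcal{A}$. For each $i$ let $\pi_{\mathcal{B}_i}:\mathcal{L}\to L_{\mathcal{B}_i}$ be the Lie homomorphism sending the elements of $E\setminus\mathrm{supp}(\mathcal{B}_i)$ to $0$ and fixing those of $\mathrm{supp}(\mathcal{B}_i)$, and $s_{\mathcal{B}_i}:L_{\mathcal{B}_i}\to\mathcal{L}$ the Lie homomorphism induced by the inclusion $\mathrm{supp}(\mathcal{B}_i)\subseteq E$. Let $\pi'_{\mathcal{B}_i}$, $s'_{\mathcal{B}_i}$ be their restrictions to the derived algebras, and let $J$ be the kernel of the surjective Lie homomorphism $\bigoplus_{i=1}^k\pi'_{\mathcal{B}_i}:\mathcal{L}'\to\bigoplus_{i=1}^kL'_{\mathcal{B}_i}$. Then: (1) $J$ is generated as an ideal of $\mathcal{L}$ by the elements $[x,s'_{\mathcal{B}_i}(u)]$ for $i=1,\dots,k$,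 $u\in L'_{\mathcal{B}_i}$ and $x\in E\setminus\mathrm{supp}(\mathcal{B}_i)$; (2) $J=0$ if and only if $[x,s'_{\mathcal{B}_i}(L'_{\mathcal{B}_i})]=0$ for all $i$ and all $x\in E\setminus\mathrm{supp}(\mathcal{B}_i)$.
   Context: All Lie algebras are over a fixed field; $\mathcal{F}(X)$ is the free Lie algebra on $X$, $\langle S\rangle$ the ideal generated by $S$, and $M'=[M,M]$ the derived algebra. A set-arrangement on a finite set $E$ is a set $\mathcal{A}$ of subsets of $E$ with $|A|\ge3$ for all $A\in\mathcal{A}$ and $|A\cap B|\le1$ for distinct $A,B\in\mathcal{A}$. For $\mathcal{B}\subseteq\mathcal{A}$ put $\mathrm{supp}(\mathcal{B})=\bigcup_{B\in\mathcal{B}}B$; $\mathcal{B}$ is closed in $\mathcal{A}$ if $|A\cap\mathrm{supp}(\mathcal{B})|\le1$ for all $A\in\mathcal{A}\setminus\mathcal{B}$. For such $\mathcal{B}$, $L_{\mathcal{B}}=\mathcal{F}(\mathrm{supp}(\mathcal{B}))/\langle R_{\mathcal{B}}\rangle$ where $R_{\mathcal{B}}=\bigcup_{B\in\mathcal{B}}R_B\cup\{[x,y]:\ x,y\in\mathrm{supp}(\mathcal{B}),\ \{x,y\}\not\subseteq B\text{ for all }B\in\mathcal{B}\}$. Elements of $E$ are identified with their images in $\mathcal{L}$. *)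

theory Defs
  imports Main
begin

text \<open>Free nonassociative (magma) algebra over a field on a set S of generators:
  finitely supported coefficient functions on binary trees with leaves in S.
  A Lie algebra presented as F(S)/<R> is represented as this magma algebra modulo
  the two-sided ideal generated by the Lie identities ([a,a] = 0, Jacobi) and R.\<close>

datatype 'a ltree = Leaf 'a | Br "'a ltree" "'a ltree"

primrec leaves :: "'a ltree \<Rightarrow> 'a set" where
  "leaves (Leaf x) = {x}"
| "leaves (Br s t) = leaves s \<union> leaves t"

definition mag :: "'a set \<Rightarrow> ('a ltree \<Rightarrow> 'k::zero) set" where
  "mag S = {f. finite {t. f t \<noteq> 0} \<and> (\<forall>t. f t \<noteq> 0 \<longrightarrow> leaves t \<subseteq> S)}"

definition madd :: "('a ltree \<Rightarrow> 'k::field) \<Rightarrow> ('a ltree \<Rightarrow> 'k) \<Rightarrow> ('a ltree \<Rightarrow> 'k)" where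
  "madd f g = (\<lambda>t. f t + g t)"

definition msub :: "('a ltree \<Rightarrow> 'k::field) \<Rightarrow> ('a ltree \<Rightarrow> 'k) \<Rightarrow> ('a ltree \<Rightarrow> 'k)" where
  "msub f g = (\<lambda>t. f t - g t)"

definition msmult :: "'k::field \<Rightarrow> ('a ltree \<Rightarrow> 'k) \<Rightarrow> ('a ltree \<Rightarrow> 'k)" where
  "msmult c f = (\<lambda>t. c * f t)"

definition br :: "('a ltree \<Rightarrow> 'k::field) \<Rightarrow> ('a ltree \<Rightarrow> 'k) \<Rightarrow> ('a ltree \<Rightarrow> 'k)" where
  "br f g = (\<lambda>u. case u of Leaf _ \<Rightarrow> 0 | Br s t \<Rightarrow> f s * g t)"

definition gen :: "'a \<Rightarrow> ('a ltree \<Rightarrow> 'k::field)" where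
  "gen x = (\<lambda>t. if t = Leaf x then 1 else 0)"

text \<open>The algebra homomorphism fixing generators in S and sending the others to 0.\<close>
definition proj :: "'a set \<Rightarrow> ('a ltree \<Rightarrow> 'k::field) \<Rightarrow> ('a ltree \<Rightarrow> 'k)" where
  "proj S f = (\<lambda>t. if leaves t \<subseteq> S then f t else 0)"

definition jacobi :: "('a ltree \<Rightarrow> 'k::field) \<Rightarrow> ('a ltree \<Rightarrow> 'k) \<Rightarrow> ('a ltree \<Rightarrow> 'k) \<Rightarrow> ('a ltree \<Rightarrow> 'k)" where
  "jacobi a b c = madd (br a (br b c)) (madd (br b (br c a)) (br c (br a b)))"

definition lie_rels :: "'a set \<Rightarrow> ('a ltree \<Rightarrow> 'k::field) set" where
  "lie_rels S = {br a a | a. a \<in> mag S}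
     \<union> {jacobi a b c | a b c. a \<in> mag S \<and> b \<in> mag S \<and> c \<in> mag S}"

inductive_set ideal_gen :: "'a set \<Rightarrow> ('a ltree \<Rightarrow> 'k::field) set \<Rightarrow> ('a ltree \<Rightarrow> 'k) set"
  for S G where
  gen: "g \<in> G \<Longrightarrow> g \<in> ideal_gen S G"
| zero: "(\<lambda>_. 0) \<in> ideal_gen S G"
| add: "f \<in> ideal_gen S G \<Longrightarrow> g \<in> ideal_gen S G \<Longrightarrow> madd f g \<in> ideal_gen S G"
| smult: "f \<in> ideal_gen S G \<Longrightarrow> msmult c f \<in> ideal_gen S G"
| left: "f \<in> ideal_gen S G \<Longrightarrow> a \<in> mag S \<Longrightarrow> br a f \<in> ideal_gen S G"
| right: "f \<in> ideal_gen S G \<Longrightarrow> a \<in> mag S \<Longrightarrow> br f a \<in> ideal_gen S G"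

definition pres_ideal :: "'a set \<Rightarrow> ('a ltree \<Rightarrow> 'k::field) set \<Rightarrow> ('a ltree \<Rightarrow> 'k) set" where
  "pres_ideal S R = ideal_gen S (lie_rels S \<union> R)"

inductive_set bracket_span :: "'a set \<Rightarrow> ('a ltree \<Rightarrow> 'k::field) set" for S where
  zero: "(\<lambda>_. 0) \<in> bracket_span S"
| brk: "a \<in> mag S \<Longrightarrow> b \<in> mag S \<Longrightarrow> br a b \<in> bracket_span S"
| add: "f \<in> bracket_span S \<Longrightarrow> g \<in> bracket_span S \<Longrightarrow> madd f g \<in> bracket_span S"

text \<open>Representatives of the derived algebra [M,M] of M = mag S / I.\<close>
definition derived :: "'a set \<Rightarrow> ('a ltree \<Rightarrow> 'k::field) set \<Rightarrow> ('a ltree \<Rightarrow> 'k) set" where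
  "derived S I = {f \<in> mag S. \<exists>g \<in> bracket_span S. msub f g \<in> I}"

definition set_arrangement :: "'a set \<Rightarrow> 'a set set \<Rightarrow> bool" where
  "set_arrangement E \<A> \<longleftrightarrow> (\<forall>A\<in>\<A>. A \<subseteq> E \<and> card A \<ge> 3)
     \<and> (\<forall>A\<in>\<A>. \<forall>B\<in>\<A>. A \<noteq> B \<longrightarrow> card (A \<inter> B) \<le> 1)"

definition supp :: "'a set set \<Rightarrow> 'a set" where
  "supp \<B> = \<Union>\<B>"

definition closed_in_arr :: "'a set set \<Rightarrow> 'a set set \<Rightarrow> bool" where
  "closed_in_arr \<A> \<B> \<longleftrightarrow> \<B> \<subseteq> \<A> \<and> (\<forall>A\<in>\<A> - \<B>. card (A \<inter> supp \<B>) \<le> 1)"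

definition arr_rels :: "'a set set \<Rightarrow> ('a set \<Rightarrow> ('a ltree \<Rightarrow> 'k::field) set) \<Rightarrow> 'a set
    \<Rightarrow> ('a ltree \<Rightarrow> 'k) set" where
  "arr_rels \<B> RA S = (\<Union>B\<in>\<B>. RA B)
     \<union> {br (gen x) (gen y) | x y. x \<in> S \<and> y \<in> S \<and> (\<forall>B\<in>\<B>. \<not> {x, y} \<subseteq> B)}"

end

theory Submission
  imports Defs HOL.Vector_Spaces "HOL-Library.Function_Algebras" "HOL-Library.Set_Algebras"
begin

text \<open>
  Let \<open>I\<close> be the ideal generated by the relations of \<open>\<L>\<close> together with the brackets
  \<open>[x, u]\<close>, \<open>x \<notin> supp(B\<^sub>i)\<close>, \<open>u \<in> L'\<^sub>B\<^sub>i\<close>. Every generator of \<open>I\<close> projects into the relations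
  of each \<open>L\<^sub>B\<^sub>j\<close>, so \<open>I \<subseteq> J\<close>. Conversely, modulo \<open>I\<close> every bracket of elements of \<open>E\<close> is
  a sum of brackets \<open>u\<^sub>i\<close> supported in the single sets \<open>supp(B\<^sub>i)\<close>: for a bracket of two
  generators this is the arrangement condition (two points of a common block lie in one
  \<open>supp(B\<^sub>i)\<close>, otherwise they commute in \<open>\<L>\<close>), and the Jacobi identity propagates it to
  longer brackets, because \<open>ad x\<close> preserves each summand modulo \<open>I\<close>. For \<open>f \<in> J\<close>, projecting
  onto \<open>supp(B\<^sub>j)\<close> turns every \<open>u\<^sub>i\<close>, \<open>i \<noteq> j\<close>, into a relation of \<open>L\<^sub>B\<^sub>j\<close>, since by
  closedness a block of \<open>B\<^sub>j\<close> meets \<open>supp(B\<^sub>i)\<close> in at most one point. Hence \<open>u\<^sub>j\<close> is a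
  relation of \<open>L\<^sub>B\<^sub>j\<close>, so it lies in \<open>I\<close>, and so does \<open>f\<close>.
\<close>

section \<open>The magma algebra as a vector space\<close>

lemma madd_eq_plus [simp]: "madd f g = f + g"
  by (simp add: madd_def fun_eq_iff)

lemma msub_eq_minus [simp]: "msub f g = f - g"
  by (simp add: msub_def fun_eq_iff)

lemma const_zero_eq_zero [simp]: "(\<lambda>_. 0) = 0"
  by (simp add: fun_eq_iff)

interpretation magma: vector_space "msmult :: 'k::field \<Rightarrow> ('a ltree \<Rightarrow> 'k) \<Rightarrow> ('a ltree \<Rightarrow> 'k)"
  by unfold_locales (simp_all add: msmult_def fun_eq_iff algebra_simps)

lemma set_plus_iff_diff: "f \<in> V + W \<longleftrightarrow> (\<exists>v\<in>V. f - v \<in> (W :: 'b::ab_group_add set))"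
proof
  assume "f \<in> V + W"
  then obtain v w where "v \<in> V" "w \<in> W" "f = v + w"
    by (auto simp: set_plus_def)
  then show "\<exists>v\<in>V. f - v \<in> W"
    by force
next
  assume "\<exists>v\<in>V. f - v \<in> W"
  then obtain v where "v \<in> V" "f - v \<in> W" ..
  then have "v + (f - v) \<in> V + W" ..
  then show "f \<in> V + W"
    by simp
qed

lemma subspace_set_plus:
  assumes "magma.subspace V" "magma.subspace W"
  shows "magma.subspace (V + W)"
proof -
  have "V + W = {x + y |x y. x \<in> V \<and> y \<in> W}"
    by (auto simp: set_plus_def)
  then show ?thesis
    using magma.subspace_sums[OF assms] by simp
qed

lemma subspace_set_sum:
  assumes "\<And>i. i \<in> A \<Longrightarrow> magma.subspace (V i)"
  shows "magma.subspace (\<Sum>i\<in>A. V i)"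
  using assms
  by (induction A rule: infinite_finite_induct) (auto intro: subspace_set_plus)

lemma subspace_set_plus_self:
  assumes "magma.subspace W"
  shows "W + W = W"
proof
  show "W + W \<subseteq> W"
    using magma.subspace_add[OF assms] by (auto simp: set_plus_def)
  show "W \<subseteq> W + W"
    using set_zero_plus2[of W W] magma.subspace_0[OF assms] by blast
qed

lemma additive_apply: "additive (\<lambda>f. f u)"
  by unfold_locales simp

definition monomial :: "'a ltree \<Rightarrow> ('a ltree \<Rightarrow> 'k::field)" where
  "monomial t = (\<lambda>u. if u = t then 1 else 0)"

lemma gen_eq_monomial: "gen x = monomial (Leaf x)"
  by (simp add: gen_def monomial_def)

lemma monomial_expansion:
  assumes "finite {t. f t \<noteq> 0}"
  shows "f = (\<Sum>t | f t \<noteq> 0. msmult (f t) (monomial t :: 'a ltree \<Rightarrow> 'k::field))"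
proof
  fix u
  have "(\<Sum>t | f t \<noteq> 0. msmult (f t) (monomial t :: 'a ltree \<Rightarrow> 'k)) u
      = (\<Sum>t | f t \<noteq> 0. msmult (f t) (monomial t) u)"
    by (rule additive.sum[OF additive_apply])
  also have "\<dots> = (\<Sum>t | f t \<noteq> 0. if t = u then f t else 0)"
    by (intro sum.cong) (auto simp: msmult_def monomial_def)
  also have "\<dots> = f u"
    using assms by simp
  finally show "f u = (\<Sum>t | f t \<noteq> 0. msmult (f t) (monomial t :: 'a ltree \<Rightarrow> 'k)) u" ..
qed

lemma subspace_mem_if_monomials_mem:
  assumes "magma.subspace P" "finite {t. f t \<noteq> 0}"
    and "\<And>t. f t \<noteq> 0 \<Longrightarrow> monomial t \<in> P"
  shows "f \<in> P"
  by (subst monomial_expansion[OF assms(2)])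
    (auto intro!: magma.subspace_sum[OF assms(1)] magma.subspace_scale[OF assms(1)] assms(3))

section \<open>Brackets, projections and ideals\<close>

lemma additive_br_left: "additive (\<lambda>f. br f g)"
  by unfold_locales (simp add: br_def fun_eq_iff algebra_simps split: ltree.split)

lemma additive_br_right: "additive (br f)"
  by unfold_locales (simp add: br_def fun_eq_iff algebra_simps split: ltree.split)

lemmas br_zero_left [simp] = additive.zero[OF additive_br_left]
  and br_zero_right [simp] = additive.zero[OF additive_br_right]
  and br_add_left = additive.add[OF additive_br_left]
  and br_add_right = additive.add[OF additive_br_right]

lemma br_smult_left: "br (msmult c f) g = msmult c (br f g)"
  by (simp add: br_def msmult_def fun_eq_iff split: ltree.split)

lemma br_monomial: "br (monomial s) (monomial t) = monomial (Br s t)"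
  by (simp add: br_def monomial_def fun_eq_iff split: ltree.split)

lemma additive_proj: "additive (proj S)"
  by unfold_locales (simp add: proj_def fun_eq_iff)

lemmas proj_add = additive.add[OF additive_proj]
  and proj_sum = additive.sum[OF additive_proj]

lemma proj_smult: "proj S (msmult c f) = msmult c (proj S f)"
  by (simp add: proj_def msmult_def fun_eq_iff)

lemma proj_br: "proj S (br f g) = br (proj S f) (proj S g)"
  by (simp add: proj_def br_def fun_eq_iff split: ltree.split)

lemma proj_gen: "proj S (gen x) = (if x \<in> S then gen x else 0)"
  by (auto simp: proj_def gen_def fun_eq_iff)

lemma proj_jacobi: "proj S (jacobi a b c) = jacobi (proj S a) (proj S b) (proj S c)"
  by (simp add: jacobi_def proj_add proj_br)

lemma subspace_mag: "magma.subspace (mag S :: ('a ltree \<Rightarrow> 'k::field) set)"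
proof (unfold magma.subspace_def, intro conjI ballI allI)
  show "0 \<in> mag S"
    by (simp add: mag_def)
next
  fix f g :: "'a ltree \<Rightarrow> 'k" assume "f \<in> mag S" "g \<in> mag S"
  moreover have "{t. (f + g) t \<noteq> 0} \<subseteq> {t. f t \<noteq> 0} \<union> {t. g t \<noteq> 0}"
    by auto
  ultimately show "f + g \<in> mag S"
    unfolding mag_def by (auto intro: finite_subset)
next
  fix c and f :: "'a ltree \<Rightarrow> 'k" assume "f \<in> mag S"
  moreover have "{t. msmult c f t \<noteq> 0} \<subseteq> {t. f t \<noteq> 0}"
    by (auto simp: msmult_def)
  ultimately show "msmult c f \<in> mag S"
    unfolding mag_def by (auto intro: finite_subset simp: msmult_def)
qed

lemma br_in_mag:
  assumes "f \<in> mag S" "g \<in> mag S"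
  shows "br f g \<in> mag S"
proof -
  have "{u. br f g u \<noteq> 0} \<subseteq> (\<lambda>(s, t). Br s t) ` ({s. f s \<noteq> 0} \<times> {t. g t \<noteq> 0})"
  proof
    fix u assume "u \<in> {u. br f g u \<noteq> 0}"
    then show "u \<in> (\<lambda>(s, t). Br s t) ` ({s. f s \<noteq> 0} \<times> {t. g t \<noteq> 0})"
      by (cases u) (auto simp: br_def)
  qed
  moreover have "finite ((\<lambda>(s, t). Br s t) ` ({s. f s \<noteq> 0} \<times> {t. g t \<noteq> 0}))"
    using assms by (auto simp: mag_def)
  ultimately have "finite {u. br f g u \<noteq> 0}"
    by (rule finite_subset)
  moreover have "leaves u \<subseteq> S" if "br f g u \<noteq> 0" for u
    using that assms by (cases u) (auto simp: mag_def br_def)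
  ultimately show ?thesis
    by (simp add: mag_def)
qed

lemma monomial_in_mag: "leaves t \<subseteq> S \<Longrightarrow> monomial t \<in> mag S"
  by (simp add: mag_def monomial_def)

lemma gen_in_mag: "x \<in> S \<Longrightarrow> gen x \<in> mag S"
  by (simp add: gen_eq_monomial monomial_in_mag)

lemma mag_mono: "S \<subseteq> T \<Longrightarrow> mag S \<subseteq> mag T"
  by (auto simp: mag_def)

lemma proj_id: "f \<in> mag S \<Longrightarrow> proj S f = f"
  by (auto simp: proj_def mag_def fun_eq_iff)

lemma proj_in_mag_inter: "f \<in> mag T \<Longrightarrow> proj S f \<in> mag (T \<inter> S)"
proof -
  assume f: "f \<in> mag T"
  have "{t. proj S f t \<noteq> 0} \<subseteq> {t. f t \<noteq> 0}"
    by (auto simp: proj_def)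
  then show ?thesis
    using f by (auto simp: mag_def proj_def intro: finite_subset)
qed

lemma proj_in_mag: "f \<in> mag T \<Longrightarrow> proj S f \<in> mag S"
  using proj_in_mag_inter mag_mono by blast

lemma subspace_ideal_gen: "magma.subspace (ideal_gen S (G :: ('a ltree \<Rightarrow> 'k::field) set))"
proof (unfold magma.subspace_def, intro conjI ballI allI)
  show "0 \<in> ideal_gen S G"
    using ideal_gen.zero by simp
next
  fix f g assume "f \<in> ideal_gen S G" "g \<in> ideal_gen S G"
  then show "f + g \<in> ideal_gen S G"
    using ideal_gen.add by simp
next
  fix c f assume "f \<in> ideal_gen S G"
  then show "msmult c f \<in> ideal_gen S G"
    by (rule ideal_gen.smult)
qed

lemmas ideal_gen_0 = magma.subspace_0[OF subspace_ideal_gen]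
  and ideal_gen_add = magma.subspace_add[OF subspace_ideal_gen]
  and ideal_gen_diff = magma.subspace_diff[OF subspace_ideal_gen]
  and ideal_gen_sum = magma.subspace_sum[OF subspace_ideal_gen]

lemma ideal_gen_subset:
  assumes "S \<subseteq> S'" and "G \<subseteq> ideal_gen S' G'"
  shows "ideal_gen S G \<subseteq> ideal_gen S' G'"
proof
  fix f assume "f \<in> ideal_gen S G"
  then show "f \<in> ideal_gen S' G'"
  proof induction
    case (add f g)
    then show ?case
      by (simp only: madd_eq_plus ideal_gen_add)
  next
    case (left f a)
    then show ?case
      using mag_mono[OF assms(1)] by (auto intro: ideal_gen.left)
  next
    case (right f a)
    then show ?case
      using mag_mono[OF assms(1)] by (auto intro: ideal_gen.right)
  qed (use assms in \<open>auto intro: ideal_gen.smult ideal_gen_0\<close>)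
qed

lemma ideal_gen_subset_mag:
  assumes "G \<subseteq> mag S"
  shows "ideal_gen S G \<subseteq> mag S"
proof
  fix f assume "f \<in> ideal_gen S G"
  then show "f \<in> mag S"
  proof induction
    case (add f g)
    then show ?case
      by (simp only: madd_eq_plus magma.subspace_add[OF subspace_mag])
  qed (use assms in \<open>auto intro: br_in_mag magma.subspace_scale[OF subspace_mag]
         magma.subspace_0[OF subspace_mag]\<close>)
qed

lemma proj_ideal_gen:
  assumes "\<And>g. g \<in> G \<Longrightarrow> proj S g \<in> ideal_gen S G'"
    and "f \<in> ideal_gen T G"
  shows "proj S f \<in> ideal_gen S G'"
  using assms(2)
proof induction
  case (left f a)
  then show ?case
    using proj_in_mag by (auto simp: proj_br intro!: ideal_gen.left)
next
  case (right f a)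
  then show ?case
    using proj_in_mag by (auto simp: proj_br intro!: ideal_gen.right)
next
  case (add f g)
  then show ?case
    by (simp only: madd_eq_plus proj_add ideal_gen_add)
qed (use assms(1) in \<open>auto simp: proj_smult additive.zero[OF additive_proj]
       intro: ideal_gen.intros ideal_gen_0\<close>)

lemma lie_rels_br_self: "a \<in> mag S \<Longrightarrow> br a a \<in> lie_rels S"
  by (auto simp: lie_rels_def)

lemma lie_rels_jacobi: "a \<in> mag S \<Longrightarrow> b \<in> mag S \<Longrightarrow> c \<in> mag S \<Longrightarrow> jacobi a b c \<in> lie_rels S"
  by (auto simp: lie_rels_def)

lemma proj_lie_rels:
  assumes "g \<in> lie_rels T"
  shows "proj S g \<in> lie_rels S"
proof -
  consider a where "a \<in> mag T" "g = br a a"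
    | a b c where "a \<in> mag T" "b \<in> mag T" "c \<in> mag T" "g = jacobi a b c"
    using assms unfolding lie_rels_def by blast
  then show ?thesis
  proof cases
    case 1
    have "proj S a \<in> mag S"
      using 1(1) by (rule proj_in_mag)
    then show ?thesis
      unfolding 1(2) proj_br by (rule lie_rels_br_self)
  next
    case 2
    have "proj S a \<in> mag S" "proj S b \<in> mag S" "proj S c \<in> mag S"
      using 2(1-3) by (auto intro: proj_in_mag)
    then show ?thesis
      unfolding 2(4) proj_jacobi by (rule lie_rels_jacobi)
  qed
qed

lemma lie_rels_subset_mag: "lie_rels S \<subseteq> mag S"
  unfolding lie_rels_def jacobi_def
  by (auto intro!: br_in_mag magma.subspace_add[OF subspace_mag] simp del: add_0)

lemma lie_rels_mono: "S \<subseteq> T \<Longrightarrow> lie_rels S \<subseteq> lie_rels T"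
  unfolding lie_rels_def using mag_mono by blast

lemma br_self_in_ideal_gen:
  "a \<in> mag S \<Longrightarrow> lie_rels S \<subseteq> G \<Longrightarrow> br a a \<in> ideal_gen S G"
  using lie_rels_br_self by (blast intro: ideal_gen.gen)

lemma br_antisym_in_ideal_gen:
  assumes "a \<in> mag S" "b \<in> mag S" "lie_rels S \<subseteq> G"
  shows "br a b + br b a \<in> ideal_gen S G"
proof -
  have "br a b + br b a = br (a + b) (a + b) - br a a - br b b"
    by (simp add: br_add_left br_add_right algebra_simps)
  moreover have "br (a + b) (a + b) \<in> ideal_gen S G" "br a a \<in> ideal_gen S G"
    "br b b \<in> ideal_gen S G"
    using assms magma.subspace_add[OF subspace_mag assms(1,2)] by (auto intro: br_self_in_ideal_gen)
  ultimately show ?thesis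
    by (simp add: ideal_gen_diff)
qed

lemma jacobi_in_ideal_gen:
  assumes "a \<in> mag S" "b \<in> mag S" "c \<in> mag S" "lie_rels S \<subseteq> G"
  shows "br a (br b c) + br b (br c a) + br c (br a b) \<in> ideal_gen S G"
proof -
  have "jacobi a b c \<in> G"
    using assms lie_rels_jacobi by blast
  then show ?thesis
    by (simp add: jacobi_def add.assoc ideal_gen.gen)
qed

lemma ad_bracket_mod_ideal_gen:
  assumes "a \<in> mag S" "b \<in> mag S" "c \<in> mag S" "lie_rels S \<subseteq> G"
  shows "br (br a b) c - (br a (br b c) - br b (br a c)) \<in> ideal_gen S G"
proof -
  have eq: "br (br a b) c - (br a (br b c) - br b (br a c))
      = (br (br a b) c + br c (br a b)) - (br a (br b c) + br b (br c a) + br c (br a b))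
        + br b (br c a + br a c)"
    by (simp add: br_add_right algebra_simps)
  have "br (br a b) c + br c (br a b) \<in> ideal_gen S G"
    using assms by (intro br_antisym_in_ideal_gen br_in_mag)
  moreover have "br a (br b c) + br b (br c a) + br c (br a b) \<in> ideal_gen S G"
    using assms by (rule jacobi_in_ideal_gen)
  moreover have "br b (br c a + br a c) \<in> ideal_gen S G"
    using assms by (intro ideal_gen.left br_antisym_in_ideal_gen)
  ultimately show ?thesis
    unfolding eq by (rule ideal_gen_add[OF ideal_gen_diff])
qed

lemma set_plus_subspace_absorb:
  assumes "magma.subspace I"
  shows "V + I + I = V + I"
  by (simp add: add.assoc subspace_set_plus_self[OF assms])

lemma additive_image_set_plus:
  assumes "additive \<phi>" "\<phi> ` V \<subseteq> V'" "\<phi> ` W \<subseteq> W'"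
  shows "\<phi> ` (V + W) \<subseteq> V' + W'"
proof
  fix x assume "x \<in> \<phi> ` (V + W)"
  then obtain v w where "v \<in> V" "w \<in> W" "x = \<phi> v + \<phi> w"
    by (auto simp: additive.add[OF assms(1)] elim!: set_plus_elim)
  then show "x \<in> V' + W'"
    using assms(2,3) by blast
qed

lemma ideal_gen_br_stable:
  assumes "a \<in> mag S" "br a ` V \<subseteq> V + ideal_gen S G"
  shows "br a ` (V + ideal_gen S G) \<subseteq> V + ideal_gen S G"
proof -
  have "br a ` ideal_gen S G \<subseteq> ideal_gen S G"
    using assms(1) by (auto intro: ideal_gen.left)
  then have "br a ` (V + ideal_gen S G) \<subseteq> V + ideal_gen S G + ideal_gen S G"
    using assms(2) by (rule additive_image_set_plus[OF additive_br_right, rotated])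
  then show ?thesis
    by (simp only: set_plus_subspace_absorb[OF subspace_ideal_gen])
qed

lemma subset_set_plus_subspace:
  assumes "magma.subspace I"
  shows "V \<subseteq> V + I"
proof
  fix v assume "v \<in> V"
  then have "v + 0 \<in> V + I"
    using magma.subspace_0[OF assms] by (rule set_plus_intro)
  then show "v \<in> V + I"
    by simp
qed

lemma additive_image_set_sum_plus:
  assumes "additive \<phi>" "magma.subspace I" "\<phi> ` I \<subseteq> I"
    and "\<And>i. i \<in> A \<Longrightarrow> \<phi> ` V i \<subseteq> V i + I"
  shows "\<phi> ` ((\<Sum>i\<in>A. V i) + I) \<subseteq> (\<Sum>i\<in>A. V i) + I"
  using assms(4)
proof (induction A rule: infinite_finite_induct)
  case (insert a A)
  have "\<phi> ` (V a + ((\<Sum>i\<in>A. V i) + I)) \<subseteq> (V a + I) + ((\<Sum>i\<in>A. V i) + I)"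
    by (rule additive_image_set_plus[OF assms(1)]) (use insert in auto)
  also have "\<dots> = V a + (\<Sum>i\<in>A. V i) + I + I"
    by (simp add: ac_simps)
  also have "\<dots> = V a + (\<Sum>i\<in>A. V i) + I"
    by (rule set_plus_subspace_absorb[OF assms(2)])
  finally show ?case
    using insert.hyps by (simp add: add.assoc)
qed (use assms(3) in simp_all)

section \<open>Sums of brackets\<close>

lemma bracket_span_add: "f \<in> bracket_span S \<Longrightarrow> g \<in> bracket_span S \<Longrightarrow> f + g \<in> bracket_span S"
  using bracket_span.add by simp

lemma subspace_bracket_span: "magma.subspace (bracket_span S :: ('a ltree \<Rightarrow> 'k::field) set)"
proof (unfold magma.subspace_def, intro conjI ballI allI)
  show "0 \<in> bracket_span S"
    using bracket_span.zero by simp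
next
  fix f g :: "'a ltree \<Rightarrow> 'k" assume "f \<in> bracket_span S" "g \<in> bracket_span S"
  then show "f + g \<in> bracket_span S"
    by (rule bracket_span_add)
next
  fix c and f :: "'a ltree \<Rightarrow> 'k" assume "f \<in> bracket_span S"
  then show "msmult c f \<in> bracket_span S"
  proof induction
    case zero
    then show ?case
      using bracket_span.zero by simp
  next
    case (brk a b)
    then show ?case
      by (simp add: br_smult_left[symmetric] bracket_span.brk magma.subspace_scale[OF subspace_mag])
  next
    case (add f g)
    show ?case
      unfolding madd_eq_plus magma.scale_right_distrib using add.IH by (rule bracket_span_add)
  qed
qed

lemma bracket_span_subset_mag: "bracket_span S \<subseteq> (mag S :: ('a ltree \<Rightarrow> 'k::field) set)"
proof
  fix f :: "'a ltree \<Rightarrow> 'k" assume "f \<in> bracket_span S"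
  then show "f \<in> mag S"
  proof induction
    case (add f g)
    then show ?case
      by (simp only: madd_eq_plus magma.subspace_add[OF subspace_mag])
  qed (auto intro: br_in_mag magma.subspace_0[OF subspace_mag])
qed

lemma bracket_span_Leaf: "f \<in> bracket_span S \<Longrightarrow> f (Leaf y) = 0"
  by (induction rule: bracket_span.induct) (auto simp: madd_def br_def)

lemma proj_bracket_span: "g \<in> bracket_span A \<Longrightarrow> proj S g \<in> bracket_span (A \<inter> S)"
proof (induction rule: bracket_span.induct)
  case zero
  then show ?case
    using magma.subspace_0[OF subspace_bracket_span] by (simp add: additive.zero[OF additive_proj])
next
  case (brk a b)
  then show ?case
    by (simp add: proj_br bracket_span.brk proj_in_mag_inter)
next
  case (add f g)
  show ?case
    unfolding madd_eq_plus proj_add using add.IH by (rule bracket_span_add)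
qed

lemma bracket_span_subset_derived:
  fixes I :: "('a ltree \<Rightarrow> 'k::field) set"
  assumes "0 \<in> I"
  shows "bracket_span S \<subseteq> derived S I"
proof
  fix f :: "'a ltree \<Rightarrow> 'k" assume "f \<in> bracket_span S"
  then show "f \<in> derived S I"
    using assms bracket_span_subset_mag unfolding derived_def by (auto intro!: bexI[of _ f])
qed

lemma derived_iff: "f \<in> derived S I \<longleftrightarrow> f \<in> mag S \<and> f \<in> bracket_span S + I"
  by (auto simp: derived_def set_plus_iff_diff)

lemma monomial_in_ideal_gen_if_not_Leaf:
  fixes G :: "('a ltree \<Rightarrow> 'k::field) set"
  assumes "T \<subseteq> S" and gens: "\<And>y z. y \<in> T \<Longrightarrow> z \<in> T \<Longrightarrow> br (gen y) (gen z) \<in> ideal_gen S G"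
  shows "leaves t \<subseteq> T \<Longrightarrow> \<forall>x. t \<noteq> Leaf x \<Longrightarrow> monomial t \<in> ideal_gen S G"
proof (induction t)
  case (Br s u)
  have m: "monomial s \<in> mag S" "monomial u \<in> mag S"
    using Br.prems(1) assms(1) by (auto intro!: monomial_in_mag)
  consider (gens) y z where "s = Leaf y" "u = Leaf z"
    | (left) "\<forall>x. s \<noteq> Leaf x" | (right) "\<forall>x. u \<noteq> Leaf x"
    by (cases s; cases u) auto
  then show ?case
  proof cases
    case gens
    then show ?thesis
      using Br.prems(1) assms(2) by (simp add: gen_eq_monomial br_monomial)
  next
    case left
    then have "monomial s \<in> ideal_gen S G"
      using Br.IH(1) Br.prems(1) by auto
    then show ?thesis
      unfolding br_monomial[symmetric] using m(2) by (rule ideal_gen.right)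
  next
    case right
    then have "monomial u \<in> ideal_gen S G"
      using Br.IH(2) Br.prems(1) by auto
    then show ?thesis
      unfolding br_monomial[symmetric] using m(1) by (rule ideal_gen.left)
  qed
qed simp

lemma bracket_span_subset_ideal_gen:
  fixes G :: "('a ltree \<Rightarrow> 'k::field) set"
  assumes "T \<subseteq> S" and "\<And>y z. y \<in> T \<Longrightarrow> z \<in> T \<Longrightarrow> br (gen y) (gen z) \<in> ideal_gen S G"
  shows "bracket_span T \<subseteq> ideal_gen S G"
proof
  fix f :: "'a ltree \<Rightarrow> 'k" assume f: "f \<in> bracket_span T"
  then have mag: "f \<in> mag T"
    using bracket_span_subset_mag by blast
  show "f \<in> ideal_gen S G"
  proof (rule subspace_mem_if_monomials_mem[OF subspace_ideal_gen])
    show "finite {t. f t \<noteq> 0}"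
      using mag by (simp add: mag_def)
  next
    fix t assume "f t \<noteq> 0"
    then have "leaves t \<subseteq> T" "\<forall>x. t \<noteq> Leaf x"
      using mag bracket_span_Leaf[OF f] by (auto simp: mag_def)
    then show "monomial t \<in> ideal_gen S G"
      by (intro monomial_in_ideal_gen_if_not_Leaf[OF assms]) simp_all
  qed
qed

lemma br_monomial_set_plus_ideal_gen:
  fixes V :: "('a ltree \<Rightarrow> 'k::field) set"
  assumes "lie_rels S \<subseteq> G" "magma.subspace V" "V \<subseteq> mag S"
    and gens: "\<And>x. x \<in> S \<Longrightarrow> br (gen x) ` V \<subseteq> V + ideal_gen S G"
  shows "leaves s \<subseteq> S \<Longrightarrow> br (monomial s) ` V \<subseteq> V + ideal_gen S G"
proof (induction s)
  case (Leaf x)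
  then show ?case
    using gens by (simp add: gen_eq_monomial)
next
  case (Br s1 s2)
  let ?I = "ideal_gen S G"
  have m: "monomial s1 \<in> mag S" "monomial s2 \<in> mag S"
    using Br.prems by (auto intro: monomial_in_mag)
  have "br (monomial s1) ` V \<subseteq> V + ?I" "br (monomial s2) ` V \<subseteq> V + ?I"
    using Br by auto
  then have stable: "br (monomial s1) ` (V + ?I) \<subseteq> V + ?I" "br (monomial s2) ` (V + ?I) \<subseteq> V + ?I"
    by (simp_all only: ideal_gen_br_stable m)
  show ?case
  proof
    fix x assume "x \<in> br (monomial (Br s1 s2)) ` V"
    then obtain v where v: "v \<in> V" "x = br (br (monomial s1) (monomial s2)) v"
      by (auto simp: br_monomial)
    define y where "y = br (monomial s1) (br (monomial s2) v) - br (monomial s2) (br (monomial s1) v)"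
    have "v \<in> V + ?I"
      using v(1) subset_set_plus_subspace[OF subspace_ideal_gen] by blast
    then have "y \<in> V + ?I"
      unfolding y_def using stable
      by (blast intro: magma.subspace_diff[OF subspace_set_plus[OF assms(2) subspace_ideal_gen]])
    moreover have "x - y \<in> ?I"
      unfolding v(2) y_def using m v(1) assms(1,3) by (blast intro: ad_bracket_mod_ideal_gen)
    ultimately have "y + (x - y) \<in> V + ?I + ?I"
      by (rule set_plus_intro)
    then show "x \<in> V + ?I"
      by (simp add: set_plus_subspace_absorb[OF subspace_ideal_gen])
  qed
qed

lemma subset_set_sum:
  assumes "finite A" "i \<in> A" "\<And>j. j \<in> A \<Longrightarrow> (0 :: 'b::comm_monoid_add) \<in> V j"
  shows "V i \<subseteq> (\<Sum>j\<in>A. V j)"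
proof
  fix v assume "v \<in> V i"
  then show "v \<in> (\<Sum>j\<in>A. V j)"
    using assms unfolding set_sum_alt[OF assms(1)]
    by (auto intro!: exI[of _ "\<lambda>j. if j = i then v else 0"])
qed

section \<open>Partitions of a set-arrangement into closed subfamilies\<close>

locale arrangement_partition =
  fixes E :: "'a set" and \<A> :: "'a set set"
    and RA :: "'a set \<Rightarrow> ('a ltree \<Rightarrow> 'k::field) set"
    and k :: nat and Bs :: "nat \<Rightarrow> 'a set set"
  assumes finite_E: "finite E"
    and arrangement: "set_arrangement E \<A>"
    and RA_derived: "\<forall>A\<in>\<A>. RA A \<subseteq> derived A (pres_ideal A {})"
    and Bs_closed: "\<forall>i<k. closed_in_arr \<A> (Bs i)"
    and Bs_disjoint: "\<forall>i<k. \<forall>j<k. i \<noteq> j \<longrightarrow> Bs i \<inter> Bs j = {}"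
    and Bs_cover: "(\<Union>i<k. Bs i) = \<A>"
begin

text \<open>
  \<open>ideal_L\<close> and \<open>ideal_B i\<close> present \<open>\<L>\<close> and \<open>L\<^sub>B\<^sub>i\<close>; \<open>cross_brackets\<close> are the elements
  \<open>[x, s'\<^sub>B\<^sub>i(u)]\<close> of part (1), and \<open>cross_ideal\<close> is the preimage of the ideal they
  generate in \<open>\<L>\<close>.
\<close>

abbreviation S :: "nat \<Rightarrow> 'a set" where
  "S i \<equiv> supp (Bs i)"

abbreviation ideal_L :: "('a ltree \<Rightarrow> 'k) set" where
  "ideal_L \<equiv> pres_ideal E (arr_rels \<A> RA E)"

abbreviation ideal_B :: "nat \<Rightarrow> ('a ltree \<Rightarrow> 'k) set" where
  "ideal_B i \<equiv> pres_ideal (S i) (arr_rels (Bs i) RA (S i))"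

abbreviation cross_brackets :: "('a ltree \<Rightarrow> 'k) set" where
  "cross_brackets \<equiv> {br (gen x) u | i x u. i < k \<and> x \<in> E - S i \<and> u \<in> derived (S i) (ideal_B i)}"

abbreviation cross_ideal :: "('a ltree \<Rightarrow> 'k) set" where
  "cross_ideal \<equiv> ideal_gen E (lie_rels E \<union> arr_rels \<A> RA E \<union> cross_brackets)"

lemma A_subset_E: "A \<in> \<A> \<Longrightarrow> A \<subseteq> E"
  using arrangement by (auto simp: set_arrangement_def)

lemma Bs_subset: "i < k \<Longrightarrow> Bs i \<subseteq> \<A>"
  using Bs_closed by (auto simp: closed_in_arr_def)

lemma S_subset_E: "i < k \<Longrightarrow> S i \<subseteq> E"
  using Bs_subset A_subset_E by (auto simp: supp_def)

lemma closed_meet_eq: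
  assumes "i < k" "A \<in> \<A>" "A \<notin> Bs i" "y \<in> A \<inter> S i" "z \<in> A \<inter> S i"
  shows "y = z"
proof -
  have "card (A \<inter> S i) \<le> 1"
    using Bs_closed assms(1-3) by (auto simp: closed_in_arr_def)
  moreover have "finite (A \<inter> S i)"
    using A_subset_E[OF assms(2)] finite_E by (auto intro: finite_subset)
  ultimately show ?thesis
    using assms(4,5) by (auto simp: card_le_Suc0_iff_eq)
qed

lemma RA_subset_mag: "A \<in> \<A> \<Longrightarrow> RA A \<subseteq> mag A"
  using RA_derived by (auto simp: derived_def)

lemma ideal_B_intro: "g \<in> lie_rels (S j) \<union> arr_rels (Bs j) RA (S j) \<Longrightarrow> g \<in> ideal_B j"
  by (simp add: pres_ideal_def ideal_gen.gen)

lemma br_gen_in_ideal_B: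
  assumes "y \<in> S j" "z \<in> S j" "y = z \<or> (\<forall>B\<in>Bs j. \<not> {y, z} \<subseteq> B)"
  shows "br (gen y) (gen z) \<in> ideal_B j"
proof (rule ideal_B_intro)
  show "br (gen y) (gen z) \<in> lie_rels (S j) \<union> arr_rels (Bs j) RA (S j)"
  proof (cases "y = z")
    case True
    then show ?thesis
      using assms(1) by (simp add: lie_rels_br_self gen_in_mag)
  next
    case False
    then show ?thesis
      using assms unfolding arr_rels_def by blast
  qed
qed

lemma br_gen_shared_in_ideal_B:
  assumes "i < k" "j < k" "i \<noteq> j" "y \<in> S i \<inter> S j" "z \<in> S i \<inter> S j"
  shows "br (gen y) (gen z) \<in> ideal_B j"
proof (rule br_gen_in_ideal_B)
  show "y = z \<or> (\<forall>B\<in>Bs j. \<not> {y, z} \<subseteq> B)"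
  proof (rule disjCI)
    assume "\<not> (\<forall>B\<in>Bs j. \<not> {y, z} \<subseteq> B)"
    then obtain B where "B \<in> Bs j" "{y, z} \<subseteq> B"
      by blast
    moreover have "B \<in> \<A>" "B \<notin> Bs i"
      using \<open>B \<in> Bs j\<close> Bs_subset Bs_disjoint assms(1-3) by blast+
    ultimately show "y = z"
      using closed_meet_eq[OF assms(1)] assms(4,5) by blast
  qed
qed (use assms in auto)

lemma proj_bracket_span_other:
  assumes "i < k" "j < k" "i \<noteq> j" "g \<in> bracket_span (S i)"
  shows "proj (S j) g \<in> ideal_B j"
proof -
  have "bracket_span (S i \<inter> S j) \<subseteq> ideal_B j"
    unfolding pres_ideal_def
    by (rule bracket_span_subset_ideal_gen)
      (use br_gen_shared_in_ideal_B[OF assms(1-3)] in \<open>auto simp: pres_ideal_def\<close>)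
  then show ?thesis
    using proj_bracket_span[OF assms(4)] by blast
qed

lemma proj_RA_in_ideal_B:
  assumes "j < k" "A \<in> \<A>" "A \<notin> Bs j" "f \<in> RA A"
  shows "proj (S j) f \<in> ideal_B j"
proof -
  obtain g h where g: "g \<in> bracket_span A" and h: "h \<in> pres_ideal A {}" and f: "f = g + h"
    using assms(2,4) RA_derived by (force simp: derived_iff elim: set_plus_elim)
  have "proj (S j) h \<in> ideal_B j"
    unfolding pres_ideal_def
    by (rule proj_ideal_gen[OF _ h[unfolded pres_ideal_def]]) (auto intro: ideal_gen.gen proj_lie_rels)
  moreover have "bracket_span (A \<inter> S j) \<subseteq> ideal_B j"
    unfolding pres_ideal_def
    by (rule bracket_span_subset_ideal_gen)
      (use br_gen_in_ideal_B closed_meet_eq[OF assms(1-3)] in \<open>auto simp: pres_ideal_def\<close>)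
  then have "proj (S j) g \<in> ideal_B j"
    using proj_bracket_span[OF g] by blast
  ultimately show ?thesis
    unfolding f proj_add pres_ideal_def by (rule ideal_gen_add[rotated])
qed

lemma proj_ideal_B_other:
  assumes "i < k" "j < k" "i \<noteq> j" "f \<in> ideal_B i"
  shows "proj (S j) f \<in> ideal_B j"
  unfolding pres_ideal_def
proof (rule proj_ideal_gen[OF _ assms(4)[unfolded pres_ideal_def]])
  fix h assume "h \<in> lie_rels (S i) \<union> arr_rels (Bs i) RA (S i)"
  then consider "h \<in> lie_rels (S i)"
    | B where "B \<in> Bs i" "h \<in> RA B"
    | y z where "y \<in> S i" "z \<in> S i" "h = br (gen y) (gen z)"
    unfolding arr_rels_def by blast
  then show "proj (S j) h \<in> ideal_gen (S j) (lie_rels (S j) \<union> arr_rels (Bs j) RA (S j))"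
  proof cases
    case 1
    then show ?thesis
      by (auto intro: ideal_gen.gen proj_lie_rels)
  next
    case 2
    then have "B \<in> \<A>" "B \<notin> Bs j"
      using Bs_subset Bs_disjoint assms(1-3) by blast+
    then show ?thesis
      using proj_RA_in_ideal_B[OF assms(2)] 2(2) by (simp add: pres_ideal_def)
  next
    case 3
    then show ?thesis
      using br_gen_shared_in_ideal_B[OF assms(1-3)]
      by (auto simp: proj_br proj_gen pres_ideal_def ideal_gen_0)
  qed
qed

lemma proj_derived_other:
  assumes "i < k" "j < k" "i \<noteq> j" "u \<in> derived (S i) (ideal_B i)"
  shows "proj (S j) u \<in> ideal_B j"
proof -
  obtain g h where "g \<in> bracket_span (S i)" "h \<in> ideal_B i" "u = g + h"
    using assms(4) by (auto simp: derived_iff elim: set_plus_elim)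
  then show ?thesis
    using proj_bracket_span_other[OF assms(1-3)] proj_ideal_B_other[OF assms(1-3)]
    by (simp add: proj_add pres_ideal_def ideal_gen_add)
qed

lemma proj_cross_ideal:
  assumes "j < k" "f \<in> cross_ideal"
  shows "proj (S j) f \<in> ideal_B j"
  unfolding pres_ideal_def
proof (rule proj_ideal_gen[OF _ assms(2)])
  fix h assume "h \<in> lie_rels E \<union> arr_rels \<A> RA E \<union> cross_brackets"
  then consider "h \<in> lie_rels E"
    | A where "A \<in> \<A>" "h \<in> RA A"
    | y z where "y \<in> E" "z \<in> E" "\<forall>A\<in>\<A>. \<not> {y, z} \<subseteq> A" "h = br (gen y) (gen z)"
    | i x u where "i < k" "x \<in> E - S i" "u \<in> derived (S i) (ideal_B i)" "h = br (gen x) u"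
    unfolding arr_rels_def by blast
  then show "proj (S j) h \<in> ideal_gen (S j) (lie_rels (S j) \<union> arr_rels (Bs j) RA (S j))"
  proof cases
    case 1
    then show ?thesis
      by (auto intro: ideal_gen.gen proj_lie_rels)
  next
    case 2
    show ?thesis
    proof (cases "A \<in> Bs j")
      case True
      then have "h \<in> mag (S j)"
        using RA_subset_mag[OF 2(1)] 2(2) mag_mono[of A "S j"] by (auto simp: supp_def)
      moreover have "h \<in> arr_rels (Bs j) RA (S j)"
        using True 2(2) by (auto simp: arr_rels_def)
      ultimately show ?thesis
        by (simp add: proj_id ideal_gen.gen)
    next
      case False
      then show ?thesis
        using proj_RA_in_ideal_B[OF assms(1) 2(1) False 2(2)] by (simp add: pres_ideal_def)
    qed
  next
    case 3
    have "\<forall>B\<in>Bs j. \<not> {y, z} \<subseteq> B"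
      using 3(3) Bs_subset[OF assms(1)] by blast
    then have "y \<in> S j \<Longrightarrow> z \<in> S j \<Longrightarrow> br (gen y) (gen z) \<in> ideal_B j"
      by (intro br_gen_in_ideal_B) simp_all
    moreover have "proj (S j) h = (if y \<in> S j \<and> z \<in> S j then br (gen y) (gen z) else 0)"
      by (simp add: 3(4) proj_br proj_gen)
    ultimately show ?thesis
      by (simp add: pres_ideal_def ideal_gen_0)
  next
    case 4
    show ?thesis
    proof (cases "x \<in> S j")
      case True
      then have "proj (S j) u \<in> ideal_B j"
        using 4 by (intro proj_derived_other[OF 4(1) assms(1)]) auto
      then show ?thesis
        using True 4(4) by (simp add: proj_br proj_gen pres_ideal_def ideal_gen.left gen_in_mag)
    next
      case False
      then show ?thesis
        using 4(4) by (simp add: proj_br proj_gen ideal_gen_0)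
    qed
  qed
qed

lemma ideal_B_subset_cross_ideal:
  assumes "j < k"
  shows "ideal_B j \<subseteq> cross_ideal"
  unfolding pres_ideal_def[of "S j"]
proof (rule ideal_gen_subset[OF S_subset_E[OF assms]], rule subsetI)
  fix h assume "h \<in> lie_rels (S j) \<union> arr_rels (Bs j) RA (S j)"
  then consider "h \<in> lie_rels (S j)"
    | B where "B \<in> Bs j" "h \<in> RA B"
    | y z where "y \<in> S j" "z \<in> S j" "\<forall>B\<in>Bs j. \<not> {y, z} \<subseteq> B" "h = br (gen y) (gen z)"
    unfolding arr_rels_def by blast
  then show "h \<in> cross_ideal"
  proof cases
    case 1
    then show ?thesis
      using lie_rels_mono[OF S_subset_E[OF assms]] by (auto intro: ideal_gen.gen)
  next
    case 2
    then show ?thesis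
      using Bs_subset[OF assms] by (auto intro!: ideal_gen.gen simp: arr_rels_def)
  next
    case 3
    have "\<not> {y, z} \<subseteq> A" if "A \<in> \<A>" for A
    proof (cases "A \<in> Bs j")
      case True
      then show ?thesis
        using 3(3) by blast
    next
      case False
      then show ?thesis
        using closed_meet_eq[OF assms that False] 3(1-3) by (auto simp: supp_def)
    qed
    then have "h \<in> arr_rels \<A> RA E"
      using 3 S_subset_E[OF assms] unfolding arr_rels_def by blast
    then show ?thesis
      by (auto intro: ideal_gen.gen)
  qed
qed

lemma cross_brackets_subset_cross_ideal: "cross_brackets \<subseteq> cross_ideal"
  by (rule subsetI, rule ideal_gen.gen) simp

lemma ideal_L_subset_cross_ideal: "ideal_L \<subseteq> cross_ideal"
  unfolding pres_ideal_def by (rule ideal_gen_subset) (auto intro: ideal_gen.gen)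

lemma derived_ideal_B_subset_mag: "i < k \<Longrightarrow> derived (S i) (ideal_B i) \<subseteq> mag E"
  using mag_mono[OF S_subset_E] by (auto simp: derived_def)

lemma cross_ideal_generators_subset_mag: "lie_rels E \<union> arr_rels \<A> RA E \<union> cross_brackets \<subseteq> mag E"
proof -
  have "RA A \<subseteq> mag E" if "A \<in> \<A>" for A
    using RA_subset_mag[OF that] mag_mono[OF A_subset_E[OF that]] by blast
  then have "arr_rels \<A> RA E \<subseteq> mag E"
    by (auto simp: arr_rels_def intro: br_in_mag gen_in_mag)
  moreover have "cross_brackets \<subseteq> mag E"
    using derived_ideal_B_subset_mag by (blast intro: br_in_mag gen_in_mag)
  ultimately show ?thesis
    using lie_rels_subset_mag by blast
qed

lemma cross_ideal_subset_derived: "cross_ideal \<subseteq> derived E ideal_L"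
proof
  fix f assume f: "f \<in> cross_ideal"
  let ?W = "bracket_span E + ideal_L"
  have W: "magma.subspace ?W"
    unfolding pres_ideal_def by (rule subspace_set_plus[OF subspace_bracket_span subspace_ideal_gen])
  have brackets: "br a b \<in> ?W" if "a \<in> mag E" "b \<in> mag E" for a b
    using bracket_span.brk[OF that] subset_set_plus_subspace[OF subspace_ideal_gen]
    by (auto simp: pres_ideal_def)
  have mag: "cross_ideal \<subseteq> mag E"
    by (rule ideal_gen_subset_mag[OF cross_ideal_generators_subset_mag])
  have "f \<in> ?W"
    using f
  proof induction
    case (gen h)
    then show ?case
    proof (cases "h \<in> cross_brackets")
      case True
      then show ?thesis
        using derived_ideal_B_subset_mag by (blast intro: brackets gen_in_mag)
    next
      case False
      then have "0 + h \<in> ?W"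
        using gen magma.subspace_0[OF subspace_bracket_span]
        by (intro set_plus_intro) (auto simp: pres_ideal_def intro: ideal_gen.gen)
      then show ?thesis
        by simp
    qed
  next
    case (add f g)
    show ?case
      unfolding madd_eq_plus using add.IH by (rule magma.subspace_add[OF W])
  qed (use mag in \<open>auto intro: brackets magma.subspace_0[OF W] magma.subspace_scale[OF W]\<close>)
  with f mag show "f \<in> derived E ideal_L"
    by (auto simp: derived_iff)
qed

abbreviation local_brackets :: "('a ltree \<Rightarrow> 'k) set" where
  "local_brackets \<equiv> (\<Sum>i<k. bracket_span (S i))"

lemma subspace_local_brackets_plus: "magma.subspace (local_brackets + cross_ideal)"
  by (intro subspace_set_plus subspace_set_sum subspace_bracket_span subspace_ideal_gen)

lemma br_monomial_local_brackets:
  assumes "leaves s \<subseteq> E"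
  shows "br (monomial s) ` (local_brackets + cross_ideal) \<subseteq> local_brackets + cross_ideal"
proof (rule additive_image_set_sum_plus[OF additive_br_right subspace_ideal_gen])
  show "br (monomial s) ` cross_ideal \<subseteq> cross_ideal"
    using monomial_in_mag[OF assms] by (auto intro: ideal_gen.left)
next
  fix i assume "i \<in> {..<k}"
  then have i: "i < k"
    by simp
  show "br (monomial s) ` bracket_span (S i) \<subseteq> bracket_span (S i) + cross_ideal"
  proof (rule br_monomial_set_plus_ideal_gen[OF _ subspace_bracket_span _ _ assms])
    show "lie_rels E \<subseteq> lie_rels E \<union> arr_rels \<A> RA E \<union> cross_brackets"
      by blast
    show "bracket_span (S i) \<subseteq> mag E"
      using bracket_span_subset_mag mag_mono[OF S_subset_E[OF i]] by blast
  next
    fix x assume x: "x \<in> E"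
    show "br (gen x) ` bracket_span (S i) \<subseteq> bracket_span (S i) + cross_ideal"
    proof (cases "x \<in> S i")
      case True
      then have "br (gen x) ` bracket_span (S i) \<subseteq> bracket_span (S i)"
        using bracket_span_subset_mag by (blast intro: bracket_span.brk gen_in_mag)
      then show ?thesis
        using subset_set_plus_subspace[OF subspace_ideal_gen] by blast
    next
      case False
      have "bracket_span (S i) \<subseteq> derived (S i) (ideal_B i)"
        by (rule bracket_span_subset_derived) (simp add: pres_ideal_def ideal_gen_0)
      then have "br (gen x) ` bracket_span (S i) \<subseteq> cross_brackets"
        using i x False by blast
      then have "br (gen x) ` bracket_span (S i) \<subseteq> cross_ideal"
        using cross_brackets_subset_cross_ideal by (rule subset_trans)
      then show ?thesis
        using set_zero_plus2[OF magma.subspace_0[OF subspace_bracket_span]] by blast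
    qed
  qed
qed

lemma cross_ideal_subset_local_brackets_plus: "cross_ideal \<subseteq> local_brackets + cross_ideal"
  using set_zero_plus2[OF magma.subspace_0[OF subspace_set_sum[OF subspace_bracket_span]]] .

lemma bracket_span_subset_local_brackets_plus:
  assumes "i < k"
  shows "bracket_span (S i) \<subseteq> local_brackets + cross_ideal"
proof -
  have "bracket_span (S i) \<subseteq> local_brackets"
    using assms magma.subspace_0[OF subspace_bracket_span]
    by (intro subset_set_sum) auto
  then show ?thesis
    using subset_set_plus_subspace[OF subspace_ideal_gen] by blast
qed

lemma br_gen_in_local_brackets_plus:
  assumes "x \<in> E" "z \<in> E"
  shows "br (gen x) (gen z) \<in> local_brackets + cross_ideal"
proof (cases "\<exists>A\<in>\<A>. {x, z} \<subseteq> A")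
  case True
  then obtain i where i: "i < k" "x \<in> S i" "z \<in> S i"
    using Bs_cover unfolding supp_def by blast
  then have "br (gen x) (gen z) \<in> bracket_span (S i)"
    by (intro bracket_span.brk gen_in_mag)
  then show ?thesis
    using bracket_span_subset_local_brackets_plus[OF i(1)] by blast
next
  case False
  then have "br (gen x) (gen z) \<in> arr_rels \<A> RA E"
    using assms unfolding arr_rels_def by blast
  then have "br (gen x) (gen z) \<in> cross_ideal"
    by (simp add: ideal_gen.gen)
  then show ?thesis
    using cross_ideal_subset_local_brackets_plus by blast
qed

lemma monomial_in_local_brackets:
  "leaves t \<subseteq> E \<Longrightarrow> \<forall>x. t \<noteq> Leaf x \<Longrightarrow> monomial t \<in> local_brackets + cross_ideal"
proof (induction t)
  case (Br s u)
  let ?W = "local_brackets + cross_ideal"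
  have ls: "leaves s \<subseteq> E" and lu: "leaves u \<subseteq> E"
    using Br.prems by auto
  consider (gens) x z where "s = Leaf x" "u = Leaf z"
    | (left) "\<forall>x. s \<noteq> Leaf x"
    | (right) "\<forall>x. u \<noteq> Leaf x"
    by (cases s; cases u) auto
  then show ?case
  proof cases
    case gens
    then show ?thesis
      using br_gen_in_local_brackets_plus[of x z] Br.prems by (simp add: gen_eq_monomial br_monomial)
  next
    case right
    then have "monomial u \<in> ?W"
      using Br.IH(2) lu by blast
    then have "br (monomial s) (monomial u) \<in> ?W"
      using br_monomial_local_brackets[OF ls] by blast
    then show ?thesis
      by (simp add: br_monomial)
  next
    case left
    then have "monomial s \<in> ?W"
      using Br.IH(1) ls by blast
    then have "br (monomial u) (monomial s) \<in> ?W"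
      using br_monomial_local_brackets[OF lu] by blast
    then have "- br (monomial u) (monomial s) \<in> ?W"
      by (rule magma.subspace_neg[OF subspace_local_brackets_plus])
    moreover have "br (monomial s) (monomial u) + br (monomial u) (monomial s) \<in> cross_ideal"
      using ls lu by (intro br_antisym_in_ideal_gen monomial_in_mag) auto
    ultimately have "- br (monomial u) (monomial s) + (br (monomial s) (monomial u) + br (monomial u) (monomial s))
        \<in> ?W + cross_ideal"
      by (rule set_plus_intro)
    then show ?thesis
      by (simp add: br_monomial set_plus_subspace_absorb[OF subspace_ideal_gen])
  qed
qed simp

lemma bracket_span_subset_local_brackets: "bracket_span E \<subseteq> local_brackets + cross_ideal"
proof
  fix g :: "'a ltree \<Rightarrow> 'k" assume g: "g \<in> bracket_span E"
  then have mag: "g \<in> mag E"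
    using bracket_span_subset_mag by blast
  show "g \<in> local_brackets + cross_ideal"
  proof (rule subspace_mem_if_monomials_mem[OF subspace_local_brackets_plus])
    show "finite {t. g t \<noteq> 0}"
      using mag by (simp add: mag_def)
  next
    fix t assume "g t \<noteq> 0"
    then have "leaves t \<subseteq> E" "\<forall>x. t \<noteq> Leaf x"
      using mag bracket_span_Leaf[OF g] by (auto simp: mag_def)
    then show "monomial t \<in> local_brackets + cross_ideal"
      by (rule monomial_in_local_brackets)
  qed
qed

lemma kernel_subset_cross_ideal:
  assumes "f \<in> derived E ideal_L" and proj_f: "\<forall>j<k. proj (S j) f \<in> ideal_B j"
  shows "f \<in> cross_ideal"
proof -
  have "f \<in> bracket_span E + ideal_L"
    using assms(1) by (simp add: derived_iff)
  also have "\<dots> \<subseteq> local_brackets + cross_ideal + cross_ideal"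
    using bracket_span_subset_local_brackets ideal_L_subset_cross_ideal by (rule set_plus_mono2)
  also have "\<dots> = local_brackets + cross_ideal"
    by (rule set_plus_subspace_absorb[OF subspace_ideal_gen])
  finally obtain u h where u: "\<forall>i\<in>{..<k}. u i \<in> bracket_span (S i)" and h: "h \<in> cross_ideal"
    and f: "f = (\<Sum>i<k. u i) + h"
    by (auto simp: set_sum_alt elim!: set_plus_elim)
  have "u j \<in> cross_ideal" if j: "j < k" for j
  proof -
    have "(\<Sum>i\<in>{..<k} - {j}. proj (S j) (u i)) \<in> ideal_B j"
      unfolding pres_ideal_def using u j
      by (intro ideal_gen_sum) (auto intro: proj_bracket_span_other[unfolded pres_ideal_def])
    moreover have "proj (S j) h \<in> ideal_B j"
      using proj_cross_ideal[OF j h] .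
    moreover have "proj (S j) (u j) = u j"
      using u j bracket_span_subset_mag by (blast intro: proj_id)
    then have "u j = proj (S j) f - (\<Sum>i\<in>{..<k} - {j}. proj (S j) (u i)) - proj (S j) h"
      using j by (simp add: f proj_add proj_sum sum.remove)
    ultimately have "u j \<in> ideal_B j"
      using proj_f j by (simp add: pres_ideal_def ideal_gen_diff)
    then show ?thesis
      using ideal_B_subset_cross_ideal[OF j] by blast
  qed
  then have "(\<Sum>i<k. u i) \<in> cross_ideal"
    by (intro ideal_gen_sum) simp
  then show ?thesis
    unfolding f using h by (rule ideal_gen_add)
qed

lemma kernel_eq_cross_ideal:
  "{f \<in> derived E ideal_L. \<forall>i<k. proj (S i) f \<in> ideal_B i} = cross_ideal"
proof (intro equalityI subsetI)
  fix f assume "f \<in> {f \<in> derived E ideal_L. \<forall>i<k. proj (S i) f \<in> ideal_B i}"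
  then show "f \<in> cross_ideal"
    using kernel_subset_cross_ideal by simp
next
  fix f assume "f \<in> cross_ideal"
  then show "f \<in> {f \<in> derived E ideal_L. \<forall>i<k. proj (S i) f \<in> ideal_B i}"
    using cross_ideal_subset_derived proj_cross_ideal by auto
qed

lemma cross_ideal_eq_ideal_L_iff:
  "cross_ideal = ideal_L \<longleftrightarrow>
    (\<forall>i<k. \<forall>x\<in>E - S i. \<forall>u\<in>derived (S i) (ideal_B i). br (gen x) u \<in> ideal_L)"
proof
  assume "cross_ideal = ideal_L"
  with cross_brackets_subset_cross_ideal
  show "\<forall>i<k. \<forall>x\<in>E - S i. \<forall>u\<in>derived (S i) (ideal_B i). br (gen x) u \<in> ideal_L"
    by blast
next
  assume "\<forall>i<k. \<forall>x\<in>E - S i. \<forall>u\<in>derived (S i) (ideal_B i). br (gen x) u \<in> ideal_L"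
  then have "cross_brackets \<subseteq> ideal_L"
    by blast
  then have "cross_ideal \<subseteq> ideal_L"
    unfolding pres_ideal_def[of E] by (intro ideal_gen_subset) (auto intro: ideal_gen.gen)
  then show "cross_ideal = ideal_L"
    using ideal_L_subset_cross_ideal by blast
qed

end

theorem mainTheorem2:
  fixes E :: "'a set" and \<A> :: "'a set set"
    and RA :: "'a set \<Rightarrow> ('a ltree \<Rightarrow> 'k::field) set"
    and k :: nat and Bs :: "nat \<Rightarrow> 'a set set"
  assumes "finite E"
    and "set_arrangement E \<A>"
    and "\<forall>A\<in>\<A>. RA A \<subseteq> derived A (pres_ideal A {})"
    and "\<forall>i<k. closed_in_arr \<A> (Bs i)"
    and "\<forall>i<k. \<forall>j<k. i \<noteq> j \<longrightarrow> Bs i \<inter> Bs j = {}"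
    and "(\<Union>i<k. Bs i) = \<A>"
  defines "IL \<equiv> pres_ideal E (arr_rels \<A> RA E)"
    and "IB \<equiv> (\<lambda>i. pres_ideal (supp (Bs i)) (arr_rels (Bs i) RA (supp (Bs i))))"
  defines "J \<equiv> {f \<in> derived E IL. \<forall>i<k. proj (supp (Bs i)) f \<in> IB i}"
    and "G \<equiv> {br (gen x) u | i x u. i < k \<and> x \<in> E - supp (Bs i)
                \<and> u \<in> derived (supp (Bs i)) (IB i)}"
  shows "J = ideal_gen E (lie_rels E \<union> arr_rels \<A> RA E \<union> G)
    \<and> (J = IL \<longleftrightarrow> (\<forall>i<k. \<forall>x\<in>E - supp (Bs i). \<forall>u\<in>derived (supp (Bs i)) (IB i).
                       br (gen x) u \<in> IL))"
proof -
  interpret arrangement_partition E \<A> RA k Bs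
    using assms(1-6) by unfold_locales
  have "J = ideal_gen E (lie_rels E \<union> arr_rels \<A> RA E \<union> G)"
    unfolding J_def G_def IL_def IB_def by (rule kernel_eq_cross_ideal)
  moreover have "ideal_gen E (lie_rels E \<union> arr_rels \<A> RA E \<union> G) = IL \<longleftrightarrow>
      (\<forall>i<k. \<forall>x\<in>E - supp (Bs i). \<forall>u\<in>derived (supp (Bs i)) (IB i). br (gen x) u \<in> IL)"
    unfolding G_def IL_def IB_def by (rule cross_ideal_eq_ideal_L_iff)
  ultimately show ?thesis
    by blast
qed

end
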